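(* Let $P$ be a set of $n\geq 5$ points in general position in the plane and let $\mathcal{P}$ be the set of all closed segments with both endpoints in $P$. If $\mathcal{P}$ contains $5$ pairwise disjoint segments each of which is clean in $\mathcal{P}$, then $\mu(D(P))\geq\binom{n}{2}-5$.
   Context: General position means no three points collinear. Two segments of $\mathcal{P}$ cross if they meet in a single point that is interior to both; a segment of $\mathcal{P}$ is clean in $\mathcal{P}$ if no other segment of $\mathcal{P}$ crosses it. $D(P)$ is the graph with vertex set $\mathcal{P}$, two segments adjacent iff disjoint. For a graph $G$ and $U\subseteq V(G)$, two distinct vertices $x,y\in U$ are $U$-mutually visible if $G$ contains a shortest $x$-$y$ path none of whose internal vertices lies in $U$; $U$ is a mutual-visibility set if every two distinct vertices of $U$ are $U$-mutually visible. $\mu(G)$ is the maximum size of a mutual-visibility set of $G$. *)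

theory Defs
  imports "HOL-Analysis.Analysis"
begin

type_synonym pt = "real ^ 2"

definition general_position :: "pt set \<Rightarrow> bool" where
  "general_position P \<longleftrightarrow>
     (\<forall>a\<in>P. \<forall>b\<in>P. \<forall>c\<in>P. a \<noteq> b \<and> a \<noteq> c \<and> b \<noteq> c \<longrightarrow> \<not> collinear {a, b, c})"

definition segments :: "pt set \<Rightarrow> pt set set" where
  "segments P = {closed_segment a b | a b. a \<in> P \<and> b \<in> P \<and> a \<noteq> b}"

definition crosses :: "pt set \<Rightarrow> pt set \<Rightarrow> bool" where
  "crosses s t \<longleftrightarrow> (\<exists>x. s \<inter> t = {x} \<and> x \<in> rel_interior s \<and> x \<in> rel_interior t)"

definition clean :: "pt set set \<Rightarrow> pt set \<Rightarrow> bool" where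
  "clean S s \<longleftrightarrow> (\<forall>t\<in>S. t \<noteq> s \<longrightarrow> \<not> crosses t s)"

text \<open>The disjointness graph D(P): vertices are segments, adjacent iff disjoint.\<close>
definition D_adj :: "pt set \<Rightarrow> pt set \<Rightarrow> bool" where
  "D_adj s t \<longleftrightarrow> s \<noteq> t \<and> s \<inter> t = {}"

definition gpath :: "'a set \<Rightarrow> ('a \<Rightarrow> 'a \<Rightarrow> bool) \<Rightarrow> 'a \<Rightarrow> 'a \<Rightarrow> 'a list \<Rightarrow> bool" where
  "gpath V E x y xs \<longleftrightarrow> xs \<noteq> [] \<and> hd xs = x \<and> last xs = y \<and> set xs \<subseteq> V \<and> distinct xs
     \<and> (\<forall>i. Suc i < length xs \<longrightarrow> E (xs ! i) (xs ! Suc i))"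

definition shortest_path :: "'a set \<Rightarrow> ('a \<Rightarrow> 'a \<Rightarrow> bool) \<Rightarrow> 'a \<Rightarrow> 'a \<Rightarrow> 'a list \<Rightarrow> bool" where
  "shortest_path V E x y xs \<longleftrightarrow> gpath V E x y xs \<and>
     (\<forall>ys. gpath V E x y ys \<longrightarrow> length xs \<le> length ys)"

definition mutually_visible :: "'a set \<Rightarrow> ('a \<Rightarrow> 'a \<Rightarrow> bool) \<Rightarrow> 'a set \<Rightarrow> 'a \<Rightarrow> 'a \<Rightarrow> bool" where
  "mutually_visible V E U x y \<longleftrightarrow>
     (\<exists>xs. shortest_path V E x y xs \<and> (\<forall>z\<in>set (butlast (tl xs)). z \<notin> U))"

definition mv_set :: "'a set \<Rightarrow> ('a \<Rightarrow> 'a \<Rightarrow> bool) \<Rightarrow> 'a set \<Rightarrow> bool" where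
  "mv_set V E U \<longleftrightarrow> U \<subseteq> V \<and> (\<forall>x\<in>U. \<forall>y\<in>U. x \<noteq> y \<longrightarrow> mutually_visible V E U x y)"

definition mu :: "'a set \<Rightarrow> ('a \<Rightarrow> 'a \<Rightarrow> bool) \<Rightarrow> nat" where
  "mu V E = Max {card U | U. mv_set V E U}"

end

theory Submission
  imports Defs
begin

text \<open>Let \<open>S\<close> be the five disjoint clean segments and \<open>U\<close> all other segments. In general
position a clean segment meets another segment only at one of that segment's endpoints, and by
disjointness each point lies in at most one member of \<open>S\<close>. Two segments of \<open>U\<close> have at most four
endpoints, so some member of \<open>S\<close> is disjoint from both: any two non-adjacent vertices of \<open>U\<close> are
joined by a shortest path of length two through \<open>S\<close>, which has no internal vertex in \<open>U\<close>.\<close>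

lemma gpath_length_ge_2:
  assumes "gpath V E x y xs" "x \<noteq> y"
  shows "length xs \<ge> 2"
  using assms by (cases xs rule: remdups_adj.cases) (auto simp: gpath_def)

lemma gpath_length_2_adjacent:
  assumes "gpath V E x y xs" "length xs = 2"
  shows "E x y"
proof -
  obtain u v where "xs = [u, v]"
    using assms(2) by (metis length_0_conv length_Suc_conv numeral_2_eq_2)
  then show ?thesis using assms(1) by (auto simp: gpath_def)
qed

lemma shortest_path_edge:
  assumes "x \<noteq> y" "E x y" "x \<in> V" "y \<in> V"
  shows "shortest_path V E x y [x, y]"
proof -
  have "gpath V E x y [x, y]"
    using assms by (auto simp: gpath_def less_Suc_eq nth_Cons')
  then show ?thesis
    using gpath_length_ge_2 assms(1) unfolding shortest_path_def by fastforce
qed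

lemma shortest_path_common_neighbour:
  assumes "x \<noteq> y" "\<not> E x y" "E x s" "E s y" "x \<noteq> s" "s \<noteq> y" "x \<in> V" "y \<in> V" "s \<in> V"
  shows "shortest_path V E x y [x, s, y]"
proof -
  have "length [x, s, y] \<le> length ys" if "gpath V E x y ys" for ys
    using gpath_length_ge_2[OF that assms(1)] gpath_length_2_adjacent[OF that] assms(2)
    by (cases "length ys = 2") auto
  moreover have "gpath V E x y [x, s, y]"
    using assms by (auto simp: gpath_def less_Suc_eq nth_Cons')
  ultimately show ?thesis unfolding shortest_path_def by blast
qed

lemma mv_set_if_common_neighbour_outside:
  assumes "U \<subseteq> V"
    and "\<And>x y. x \<in> U \<Longrightarrow> y \<in> U \<Longrightarrow> x \<noteq> y \<Longrightarrow> \<not> E x y \<Longrightarrow> \<exists>s\<in>V - U. E x s \<and> E s y"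
  shows "mv_set V E U"
  unfolding mv_set_def
proof (intro conjI ballI impI)
  fix x y assume x: "x \<in> U" and y: "y \<in> U" and "x \<noteq> y"
  show "mutually_visible V E U x y"
  proof (cases "E x y")
    case True
    then have "shortest_path V E x y [x, y]"
      using \<open>x \<noteq> y\<close> x y assms(1) by (intro shortest_path_edge) auto
    then show ?thesis unfolding mutually_visible_def by force
  next
    case False
    then obtain s where s: "s \<in> V - U" "E x s" "E s y"
      using assms(2) x y \<open>x \<noteq> y\<close> by blast
    then have "shortest_path V E x y [x, s, y]"
      using False \<open>x \<noteq> y\<close> x y assms(1) by (intro shortest_path_common_neighbour) auto
    then show ?thesis unfolding mutually_visible_def using s(1) by force
  qed
qed (use assms(1) in simp)

lemma card_le_mu:
  assumes "finite V" "mv_set V E U"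
  shows "card U \<le> mu V E"
proof -
  have "{card U | U. mv_set V E U} \<subseteq> card ` Pow V"
    unfolding mv_set_def by auto
  then have "finite {card U | U. mv_set V E U}"
    using assms(1) finite_subset by blast
  then show ?thesis unfolding mu_def using assms(2) by (auto intro: Max_ge)
qed

lemma card_pairwise_disjnt_meeting_le:
  assumes "pairwise disjnt S" "finite X"
  shows "card {s \<in> S. s \<inter> X \<noteq> {}} \<le> card X"
proof -
  have at_most_one: "card {s \<in> S. x \<in> s} \<le> 1" for x
  proof (cases "{s \<in> S. x \<in> s} = {}")
    case False
    then obtain t where "{s \<in> S. x \<in> s} = {t}"
      using assms(1) unfolding pairwise_def disjnt_def by blast
    then show ?thesis by simp
  next
    case True
    then show ?thesis by (metis card.empty zero_le_one)
  qed
  have "{s \<in> S. s \<inter> X \<noteq> {}} = (\<Union>x\<in>X. {s \<in> S. x \<in> s})"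
    by blast
  also have "card \<dots> \<le> (\<Sum>x\<in>X. card {s \<in> S. x \<in> s})"
    using assms(2) by (rule card_UN_le)
  also have "\<dots> \<le> (\<Sum>x\<in>X. 1)"
    by (rule sum_mono) (rule at_most_one)
  finally show ?thesis by simp
qed

lemma pairwise_disjnt_avoiding:
  assumes "pairwise disjnt S" "finite S" "finite X" "card X < card S"
  shows "\<exists>s\<in>S. s \<inter> X = {}"
proof (rule ccontr)
  assume "\<not> ?thesis"
  then have "S = {s \<in> S. s \<inter> X \<noteq> {}}" by blast
  then show False
    using card_pairwise_disjnt_meeting_le[OF assms(1,3)] assms(4) by simp
qed

lemma finite_segments:
  assumes "finite P"
  shows "finite (segments P)"
proof (rule finite_subset)
  show "segments P \<subseteq> (\<lambda>(a, b). closed_segment a b) ` (P \<times> P)"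
    unfolding segments_def by auto
qed (use assms in simp)

lemma card_choose_2_le_card_segments:
  assumes "finite P"
  shows "card P choose 2 \<le> card (segments P)"
proof -
  let ?pairs = "{B. B \<subseteq> P \<and> card B = 2}"
  have sub: "(\<lambda>B. convex hull B) ` ?pairs \<subseteq> segments P"
  proof
    fix z assume "z \<in> (\<lambda>B. convex hull B) ` ?pairs"
    then obtain a b where "a \<in> P" "b \<in> P" "a \<noteq> b" "z = closed_segment a b"
      by (auto simp: card_2_iff segment_convex_hull)
    then show "z \<in> segments P" unfolding segments_def by blast
  qed
  have inj: "inj_on (\<lambda>B. convex hull B) ?pairs"
  proof (rule inj_onI)
    fix B C assume "B \<in> ?pairs" "C \<in> ?pairs" and hull: "convex hull B = convex hull C"
    then obtain a b c d where "B = {a, b}" "C = {c, d}"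
      by (auto simp: card_2_iff)
    moreover have "closed_segment a b = closed_segment c d"
      using hull calculation by (simp add: segment_convex_hull)
    ultimately show "B = C" using closed_segment_eq by blast
  qed
  have "card P choose 2 = card ?pairs"
    using n_subsets[OF assms] by simp
  also have "\<dots> = card ((\<lambda>B. convex hull B) ` ?pairs)"
    using card_image[OF inj] by simp
  also have "\<dots> \<le> card (segments P)"
    using card_mono[OF finite_segments[OF assms] sub] .
  finally show ?thesis .
qed

lemma collinear_mem_closed_segment:
  fixes a b x :: "'a::real_vector"
  assumes "x \<in> closed_segment a b"
  shows "collinear {a, b, x}"
  using assms collinear_closed_segment collinear_subset
  by (metis ends_in_segment(1,2) empty_subsetI insert_subset)

lemma general_position_meeting_segments_cross:
  fixes a b c d p :: pt
  assumes gp: "general_position P" and P: "a \<in> P" "b \<in> P" "c \<in> P" "d \<in> P"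
    and dist: "a \<noteq> b" "c \<noteq> d" "a \<noteq> c" "a \<noteq> d" "b \<noteq> c" "b \<noteq> d"
    and p: "p \<in> closed_segment a b" "p \<in> closed_segment c d"
  shows "crosses (closed_segment c d) (closed_segment a b)"
proof -
  have nc: "\<not> collinear {x, y, z}" if "x \<in> {a,b,c,d}" "y \<in> {a,b,c,d}" "z \<in> {a,b,c,d}"
    "x \<noteq> y" "x \<noteq> z" "y \<noteq> z" for x y z
    using gp that P unfolding general_position_def by blast
  have ends_ab: "p \<noteq> a" "p \<noteq> b"
    using collinear_mem_closed_segment[OF p(2)] nc[of c d a] nc[of c d b] dist by auto
  have ends_cd: "p \<noteq> c" "p \<noteq> d"
    using collinear_mem_closed_segment[OF p(1)] nc[of a b c] nc[of a b d] dist by auto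
  have unique: "q = p" if q: "q \<in> closed_segment a b" "q \<in> closed_segment c d" for q
  proof (rule ccontr)
    assume "q \<noteq> p"
    have "{p, q, a, b} \<subseteq> closed_segment a b" "{p, q, c, d} \<subseteq> closed_segment c d"
      using p q by auto
    then have "collinear {p, q, a, b}" "collinear {p, q, c, d}"
      using collinear_closed_segment collinear_subset by blast+
    \<comment> \<open>both segments lie on the line through \<open>p\<close> and \<open>q\<close>\<close>
    then have "collinear {p, q, a, b, c}"
      using \<open>q \<noteq> p\<close> collinear_triples[of p q "{a,b}"] collinear_triples[of p q "{c,d}"]
        collinear_triples[of p q "{a,b,c}"] by auto
    then have "collinear {a, b, c}" by (rule collinear_subset) auto
    then show False using nc[of a b c] dist by auto
  qed
  have "closed_segment c d \<inter> closed_segment a b = {p}"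
    using unique p by blast
  moreover have "p \<in> rel_interior (closed_segment a b)" "p \<in> rel_interior (closed_segment c d)"
    using p dist(1,2) ends_ab ends_cd by (simp_all add: rel_interior_closed_segment open_segment_def)
  ultimately show ?thesis unfolding crosses_def by blast
qed

lemma clean_segment_meets_endpoint:
  assumes gp: "general_position P" and "c \<in> P" "d \<in> P" "c \<noteq> d"
    and s: "s \<in> segments P" and cl: "clean (segments P) s"
    and meet: "s \<inter> closed_segment c d \<noteq> {}"
  shows "c \<in> s \<or> d \<in> s"
proof (rule ccontr)
  assume n: "\<not> (c \<in> s \<or> d \<in> s)"
  obtain a b where ab: "s = closed_segment a b" "a \<in> P" "b \<in> P" "a \<noteq> b"
    using s unfolding segments_def by blast
  then have dist: "a \<noteq> c" "a \<noteq> d" "b \<noteq> c" "b \<noteq> d" using n by auto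
  obtain p where "p \<in> closed_segment a b" "p \<in> closed_segment c d" using meet ab by blast
  then have "crosses (closed_segment c d) s"
    using general_position_meeting_segments_cross[OF gp ab(2,3) assms(2,3) ab(4) assms(4) dist] ab
    by simp
  moreover have "closed_segment c d \<in> segments P" using assms(2-4) unfolding segments_def by blast
  moreover have "closed_segment c d \<noteq> s" using n by auto
  ultimately show False using cl unfolding clean_def by blast
qed

lemma clean_segment_avoiding_two:
  assumes gp: "general_position P" and S: "S \<subseteq> segments P" "finite S" "card S \<ge> 5"
    and disj: "pairwise disjnt S" and cl: "\<And>s. s \<in> S \<Longrightarrow> clean (segments P) s"
    and x: "x \<in> segments P" and y: "y \<in> segments P"
  shows "\<exists>s\<in>S. s \<inter> x = {} \<and> s \<inter> y = {}"
proof -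
  obtain c d where cd: "x = closed_segment c d" "c \<in> P" "d \<in> P" "c \<noteq> d"
    using x unfolding segments_def by blast
  obtain c' d' where cd': "y = closed_segment c' d'" "c' \<in> P" "d' \<in> P" "c' \<noteq> d'"
    using y unfolding segments_def by blast
  have "card {c, d, c', d'} \<le> 4"
    using card_length[of "[c, d, c', d']"] by simp
  then have "card {c, d, c', d'} < card S"
    using S(3) by linarith
  then obtain s where s: "s \<in> S" "s \<inter> {c, d, c', d'} = {}"
    by (metis pairwise_disjnt_avoiding[OF disj S(2)] finite.emptyI finite.insertI)
  have avoid: "s \<inter> closed_segment u v = {}"
    if "u \<in> P" "v \<in> P" "u \<noteq> v" "u \<notin> s" "v \<notin> s" for u v
    using clean_segment_meets_endpoint[OF gp that(1-3)] s(1) S(1) cl that(4,5) by blast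
  have "s \<inter> x = {}" "s \<inter> y = {}"
    using avoid[OF cd(2-4)] avoid[OF cd'(2-4)] s(2) cd(1) cd'(1) by auto
  then show ?thesis using s(1) by blast
qed

theorem proposition11:
  fixes P :: "pt set"
  assumes "finite P" and "card P \<ge> 5" and "general_position P"
    and "\<exists>S \<subseteq> segments P. card S = 5 \<and>
           (\<forall>s\<in>S. \<forall>t\<in>S. s \<noteq> t \<longrightarrow> s \<inter> t = {}) \<and>
           (\<forall>s\<in>S. clean (segments P) s)"
  shows "mu (segments P) D_adj \<ge> (card P choose 2) - 5"
proof -
  obtain S where S: "S \<subseteq> segments P" "card S = 5"
    and disj: "\<forall>s\<in>S. \<forall>t\<in>S. s \<noteq> t \<longrightarrow> s \<inter> t = {}"
    and clean: "\<forall>s\<in>S. clean (segments P) s"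
    using assms(4) by auto
  have "finite S" "card S \<ge> 5" using S(2) by (simp_all add: card_ge_0_finite)
  have "pairwise disjnt S" using disj unfolding pairwise_def disjnt_def by blast
  have "mv_set (segments P) D_adj (segments P - S)"
  proof (rule mv_set_if_common_neighbour_outside)
    fix x y assume x: "x \<in> segments P - S" and y: "y \<in> segments P - S"
    obtain s where "s \<in> S" "s \<inter> x = {}" "s \<inter> y = {}"
      using clean_segment_avoiding_two[OF assms(3) S(1) \<open>finite S\<close> \<open>card S \<ge> 5\<close>
          \<open>pairwise disjnt S\<close> _ DiffD1[OF x] DiffD1[OF y]] clean
      by blast
    then show "\<exists>s\<in>segments P - (segments P - S). D_adj x s \<and> D_adj s y"
      using S(1) x y by (auto simp: D_adj_def)
  qed auto
  then have "card (segments P - S) \<le> mu (segments P) D_adj"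
    by (rule card_le_mu[OF finite_segments[OF assms(1)]])
  moreover have "card (segments P - S) = card (segments P) - 5"
    using card_Diff_subset[OF \<open>finite S\<close> S(1)] S(2) by simp
  ultimately show ?thesis using card_choose_2_le_card_segments[OF assms(1)] by linarith
qed

end
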